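(* Under the hypotheses of Theorem 5 (Part II) stated in the context, let $H$ denote the cdf of the limit $Z_\infty$, where either $c=0$ and $E e^{-\lambda Z_\infty}=\Phi_\rho(\lambda)$, or $c=\infty$ (with $(\mathrm{A}_\alpha)$) and $E e^{-\lambda Z_\infty}=\Phi_\alpha(\lambda)$. Then $H$ belongs to the normal domain of attraction of a stable law with parameter $\rho\in(1/2,1)$; namely, there is a constant $C\in(0,\infty)$ with $1-H(x)\sim C x^{-\rho}$ as $x\to\infty$.
   Context: Standing parameters: $b>0$ (half the offspring variance), $\theta<1/2$, $\rho\in(1/2,1)$ with $\theta+\rho<1$, and $\alpha\in(1/2,1]$. For $a\in(0,1]$ and $\lambda\ge0$, $$\Phi_a(\lambda)=1-\lambda^{\rho-a}(\lambda+1)^{a-\theta-\rho}(a+1-\theta-\rho)B(1-\theta,a+1-\rho)\,I_{\lambda/(\lambda+1)}(a,1-\theta-\rho)-\frac{\lambda\theta}{B(1-\rho,a)}\int_0^1\!\!\int_0^1\frac{u^{1-\rho}(1-u)^{a-1}}{(1-y)^{\rho}(1+\lambda yu)^{\theta+1}}\,dy\,du,$$ where $B$ is the Beta function, $B_x(s,v)=\int_0^x t^{s-1}(1-t)^{v-1}dt$ and $I_x(s,v)=B_x(s,v)/B(s,v)$. Theorem 5 (Part II) asserts that for the critical branching regenerative process with migration $Z_t$ (offspring mean 1, variance $2b$; recurrence parameter $\theta$; cycle initial states with tail $P\{Y^o_{j,0}>x\}\sim x^{-\rho}\ell(x)$; down-periods either of finite mean or with tail $1-A(t)\sim t^{-\alpha}L_A(t)$,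 $E T_{d,1}=\infty$; $c=\lim(1-A(t))/(1-F(t))$ with $F$ the cdf of the cycle lifetime), the limit $Z_\infty$ of $Z_t/(bt)$ (unconditionally if $c<\infty$, conditionally on $Z_t>0$ if $c=\infty$) has Laplace transform $(c+\Phi_\rho)/(c+1)$ if $c<\infty$ and $\Phi_\alpha$ if $c=\infty$. A random variable is in the normal domain of attraction of a positive stable law with parameter $\rho\in(0,1)$ when its tail is asymptotically $Cx^{-\rho}$, $C>0$. *)

theory Defs
  imports "HOL-Probability.Probability" "HOL-Library.Landau_Symbols"
begin

definition incBeta :: "real \<Rightarrow> real \<Rightarrow> real \<Rightarrow> real" where
  "incBeta x s v = (LBINT t=0..x. t powr (s - 1) * (1 - t) powr (v - 1))"

definition regIncBeta :: "real \<Rightarrow> real \<Rightarrow> real \<Rightarrow> real" where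
  "regIncBeta x s v = incBeta x s v / Beta s v"

definition Phi :: "real \<Rightarrow> real \<Rightarrow> real \<Rightarrow> real \<Rightarrow> real" where
  "Phi \<theta> \<rho> a lam =
     1 - lam powr (\<rho> - a) * (lam + 1) powr (a - \<theta> - \<rho>)
         * (a + 1 - \<theta> - \<rho>) * Beta (1 - \<theta>) (a + 1 - \<rho>)
         * regIncBeta (lam / (lam + 1)) a (1 - \<theta> - \<rho>)
       - lam * \<theta> / Beta (1 - \<rho>) a *
         (LBINT u=0..1. (LBINT y=0..1.
            u powr (1 - \<rho>) * (1 - u) powr (a - 1)
            / ((1 - y) powr \<rho> * (1 + lam * y * u) powr (\<theta> + 1))))"

end

theory Submission
  imports Defs
begin

text \<open>
  As \<open>\<lambda> \<rightarrow> 0+\<close>, \<open>1 - Phi_a(\<lambda>) \<sim> K \<lambda>^\<rho>\<close> with an explicit \<open>K > 0\<close>: in the incomplete-Beta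
  term \<open>I_x(a, v) \<sim> x^a / (a B(a, v))\<close> as \<open>x \<rightarrow> 0\<close>, and the double integral stays bounded, so the
  last term is \<open>O(\<lambda>) = o(\<lambda>^\<rho>)\<close>. Since \<open>Phi_a\<close> is the Laplace transform of \<open>Z\<^sub>\<infinity>\<close>, the tail
  asymptotics follow from the Tauberian theorem \<open>1 - E e^(-s Z) \<sim> K s^\<rho> \<Longrightarrow> P(Z > x) \<sim> C x^(-\<rho>)\<close>,
  proved in Karamata's way: for a polynomial \<open>p\<close> with \<open>p(1) = 0\<close>, \<open>E p(e^(-s Z)) / s^\<rho>\<close> tends to a
  fixed multiple of \<open>\<integral>\<^sub>0\<^sup>\<infinity> p(e^(-y)) y^(-\<rho>-1) dy\<close>, and by Weierstrass approximation the indicator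
  of \<open>[0, e^(-1))\<close> lies between two such polynomials whose integrals are arbitrarily close.
\<close>

lemma set_integral_powr_at_0:
  fixes p c :: real
  assumes "p > -1" "c > 0"
  shows "set_integrable lborel {0<..<c} (\<lambda>y. y powr p)"
    and "(LINT y:{0<..<c}|lborel. y powr p) = c powr (p + 1) / (p + 1)"
proof -
  have F0: "((\<lambda>y. y powr (p + 1) / (p + 1)) \<longlongrightarrow> 0) (at_right 0)"
  proof -
    have "((\<lambda>y. y powr (p + 1) / (p + 1)) \<longlongrightarrow> 0 powr (p + 1) / (p + 1)) (at_right 0)"
      using assms by (intro tendsto_intros tendsto_powr')
        (auto simp: eventually_at_right_less eventually_at_filter)
    then show ?thesis by simp
  qed
  have Fc: "((\<lambda>y. y powr (p + 1) / (p + 1)) \<longlongrightarrow> c powr (p + 1) / (p + 1)) (at_left c)"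
    using assms by (intro tendsto_intros) auto
  have D: "DERIV (\<lambda>y. y powr (p + 1) / (p + 1)) x :> x powr p" if "0 < x" for x
  proof -
    have "DERIV (\<lambda>y. y powr (p + 1) / (p + 1)) x :> (p + 1) * x powr (p + 1 - 1) / (p + 1)"
      using that by (intro DERIV_cdivide has_real_derivative_powr)
    then show ?thesis using assms by simp
  qed
  note FTC = interval_integral_FTC_nonneg[where a = "ereal 0" and b = "ereal c" and f = "\<lambda>y. y powr p",
      OF _ D _ _ F0[folded ereal_tendsto_simps1] Fc[folded ereal_tendsto_simps1]]
  have "set_integrable lborel (einterval (ereal 0) (ereal c)) (\<lambda>y. y powr p)"
    and "(LBINT y=ereal 0..ereal c. y powr p) = c powr (p + 1) / (p + 1) - 0"
    by (rule FTC; use assms in \<open>auto intro!: continuous_intros\<close>)+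
  then show "set_integrable lborel {0<..<c} (\<lambda>y. y powr p)"
    and "(LINT y:{0<..<c}|lborel. y powr p) = c powr (p + 1) / (p + 1)"
    using assms by (simp_all add: interval_lebesgue_integral_def zero_ereal_def)
qed

lemma set_integral_powr_at_top:
  fixes q c :: real
  assumes "q < -1" "c > 0"
  shows "set_integrable lborel {c<..} (\<lambda>y. y powr q)"
    and "(LINT y:{c<..}|lborel. y powr q) = - (c powr (q + 1) / (q + 1))"
proof -
  have Fc: "((\<lambda>y. y powr (q + 1) / (q + 1)) \<longlongrightarrow> c powr (q + 1) / (q + 1)) (at_right c)"
    using assms by (intro tendsto_intros) auto
  have Finf: "((\<lambda>y. y powr (q + 1) / (q + 1)) \<longlongrightarrow> 0) at_top"
  proof -
    have "((\<lambda>y. y powr (q + 1) / (q + 1)) \<longlongrightarrow> 0 / (q + 1)) at_top"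
      using assms by (intro tendsto_intros tendsto_neg_powr filterlim_ident) auto
    then show ?thesis by simp
  qed
  have D: "DERIV (\<lambda>y. y powr (q + 1) / (q + 1)) x :> x powr q" if "0 < x" for x
  proof -
    have "DERIV (\<lambda>y. y powr (q + 1) / (q + 1)) x :> (q + 1) * x powr (q + 1 - 1) / (q + 1)"
      using that by (intro DERIV_cdivide has_real_derivative_powr)
    then show ?thesis using assms by simp
  qed
  note FTC = interval_integral_FTC_nonneg[where a = "ereal c" and b = \<infinity> and f = "\<lambda>y. y powr q",
      OF _ _ _ _ Fc[folded ereal_tendsto_simps1] Finf[folded ereal_tendsto_simps1]]
  have "set_integrable lborel (einterval (ereal c) \<infinity>) (\<lambda>y. y powr q)"
    and "(LBINT y=ereal c..\<infinity>. y powr q) = 0 - c powr (q + 1) / (q + 1)"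
    by (rule FTC; use assms D in \<open>auto intro!: continuous_intros\<close>)+
  then show "set_integrable lborel {c<..} (\<lambda>y. y powr q)"
    and "(LINT y:{c<..}|lborel. y powr q) = - (c powr (q + 1) / (q + 1))"
    using assms by (simp_all add: interval_lebesgue_integral_def)
qed

lemma abs_set_integral_le_bound:
  fixes f g :: "'a \<Rightarrow> real"
  assumes g: "set_integrable M A g" and fg: "\<And>x. x \<in> A \<Longrightarrow> \<bar>f x\<bar> \<le> g x"
  shows "\<bar>LINT x:A|M. f x\<bar> \<le> (LINT x:A|M. g x)"
proof (cases "set_integrable M A f")
  case True
  have "\<bar>LINT x:A|M. f x\<bar> \<le> (LINT x:A|M. \<bar>f x\<bar>)"
    using set_integral_norm_bound[OF True] by simp
  also have "\<dots> \<le> (LINT x:A|M. g x)"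
    using True g fg by (intro set_integral_mono) (auto simp: set_integrable_abs)
  finally show ?thesis .
next
  case False
  then have "(LINT x:A|M. f x) = 0"
    by (simp add: set_lebesgue_integral_def set_integrable_def not_integrable_integral_eq)
  moreover have "0 \<le> (LINT x:A|M. g x)"
    unfolding set_lebesgue_integral_def
    using fg by (intro integral_nonneg_AE AE_I2) (auto simp: indicator_def intro: order_trans[OF abs_ge_zero])
  ultimately show ?thesis by simp
qed

lemma inverse_powr_le_two_powr_abs:
  fixes z q :: real
  assumes "1 \<le> z" "z \<le> 2"
  shows "inverse (z powr q) \<le> 2 powr \<bar>q\<bar>"
proof (cases "q \<le> 0")
  case True
  then have "z powr - q \<le> 2 powr - q" using assms by (intro powr_mono2) auto
  then show ?thesis using True by (simp add: powr_minus)
next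
  case False
  then have "z powr - q \<le> 1 powr - q" using assms by (intro powr_mono2') auto
  then show ?thesis by (simp add: powr_minus order_trans[OF _ ge_one_powr_ge_zero])
qed

lemma tendsto_squeeze_approx:
  fixes f :: "'a \<Rightarrow> real"
  assumes c: "0 \<le> c"
    and approx: "\<And>\<epsilon>. \<epsilon> > 0 \<Longrightarrow> \<exists>lo hi a b. (\<forall>\<^sub>F x in F. lo x \<le> f x \<and> f x \<le> hi x) \<and>
      (lo \<longlongrightarrow> c * a) F \<and> (hi \<longlongrightarrow> c * b) F \<and> a \<le> l \<and> l \<le> b \<and> b - a < \<epsilon>"
  shows "(f \<longlongrightarrow> c * l) F"
proof (rule order_tendstoI)
  fix u assume u: "c * l < u"
  define \<epsilon> where "\<epsilon> = (u - c * l) / (c + 1)"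
  have \<epsilon>: "\<epsilon> > 0" "c * \<epsilon> < u - c * l"
    using u c by (auto simp: \<epsilon>_def field_simps)
  then obtain lo hi a b where lohi: "\<forall>\<^sub>F x in F. lo x \<le> f x \<and> f x \<le> hi x"
    and "(hi \<longlongrightarrow> c * b) F" "a \<le> l" "b - a < \<epsilon>"
    using approx[of \<epsilon>] by auto
  moreover have "c * b < u"
    using \<open>a \<le> l\<close> \<open>b - a < \<epsilon>\<close> mult_left_mono[of b "l + \<epsilon>" c] \<epsilon>(2) c by (simp add: distrib_left)
  ultimately have "\<forall>\<^sub>F x in F. hi x < u" by (intro order_tendstoD(2))
  with lohi show "\<forall>\<^sub>F x in F. f x < u" by eventually_elim auto
next
  fix u assume u: "u < c * l"
  define \<epsilon> where "\<epsilon> = (c * l - u) / (c + 1)"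
  have \<epsilon>: "\<epsilon> > 0" "c * \<epsilon> < c * l - u"
    using u c by (auto simp: \<epsilon>_def field_simps)
  then obtain lo hi a b where lohi: "\<forall>\<^sub>F x in F. lo x \<le> f x \<and> f x \<le> hi x"
    and "(lo \<longlongrightarrow> c * a) F" "l \<le> b" "b - a < \<epsilon>"
    using approx[of \<epsilon>] by auto
  moreover have "u < c * a"
    using \<open>l \<le> b\<close> \<open>b - a < \<epsilon>\<close> mult_left_mono[of "l - \<epsilon>" a c] \<epsilon>(2) c by (simp add: right_diff_distrib)
  ultimately have "\<forall>\<^sub>F x in F. u < lo x" by (intro order_tendstoD(1))
  with lohi show "\<forall>\<^sub>F x in F. u < f x" by eventually_elim auto
qed

lemma tendsto_rescale_at_right_0:
  fixes f :: "real \<Rightarrow> real"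
  assumes lim: "((\<lambda>s. f s / s powr r) \<longlongrightarrow> K) (at_right 0)" and c: "c > 0"
  shows "((\<lambda>s. f (c * s) / s powr r) \<longlongrightarrow> c powr r * K) (at_right 0)"
proof -
  have "filterlim (\<lambda>s. c * s) (at_right 0) (at_right 0)"
  proof -
    have "((\<lambda>s. c * s) \<longlongrightarrow> c * 0) (at_right 0)" by (intro tendsto_intros)
    moreover have "\<forall>\<^sub>F s in at_right (0::real). c * s \<in> {0<..}"
      using eventually_at_right_less[of "0::real"] by (rule eventually_mono) (use c in simp)
    ultimately show ?thesis by (simp add: filterlim_at_withinI)
  qed
  from filterlim_compose[OF lim this]
  have "((\<lambda>s. c powr r * (f (c * s) / (c * s) powr r)) \<longlongrightarrow> c powr r * K) (at_right 0)"
    by (intro tendsto_intros)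
  moreover have "\<forall>\<^sub>F s in at_right 0. c powr r * (f (c * s) / (c * s) powr r) = f (c * s) / s powr r"
    using c by (auto simp: eventually_at_right_less powr_mult)
  ultimately show ?thesis by (rule Lim_transform_eventually)
qed

lemma tendsto_bounded_times_powr_at_0:
  fixes f :: "real \<Rightarrow> real"
  assumes r: "r < 1" and bounded: "\<And>s. s \<in> {0<..1} \<Longrightarrow> \<bar>f s\<bar> \<le> B"
  shows "((\<lambda>s. s * f s / s powr r) \<longlongrightarrow> 0) (at_right 0)"
proof (rule Lim_null_comparison)
  have "\<forall>\<^sub>F s in at_right (0::real). s \<le> 1"
    unfolding eventually_at_right_field by (intro exI[of _ 1]) auto
  with eventually_at_right_less[of "0::real"]
  show "\<forall>\<^sub>F s in at_right 0. norm (s * f s / s powr r) \<le> s powr (1 - r) * B"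
  proof eventually_elim
    case (elim s)
    then have "norm (s * f s / s powr r) = s powr (1 - r) * \<bar>f s\<bar>"
      by (simp add: powr_diff abs_mult)
    also have "\<dots> \<le> s powr (1 - r) * B"
      using bounded[of s] elim by (intro mult_left_mono) auto
    finally show ?case .
  qed
  have "((\<lambda>s. s powr (1 - r) * B) \<longlongrightarrow> 0 powr (1 - r) * B) (at_right 0)"
    using r by (intro tendsto_intros tendsto_powr') (auto simp: eventually_at_right_less eventually_at_filter)
  then show "((\<lambda>s. s powr (1 - r) * B) \<longlongrightarrow> 0) (at_right 0)"
    using r by simp
qed

section \<open>Karamata's Tauberian theorem for a pure power\<close>

text \<open>Karamata's reference functional: integration against the image of the measure
  \<open>y powr (-r-1) dy\<close> on \<open>(0,\<infinity>)\<close> under \<open>y \<mapsto> exp (-y)\<close>. On \<open>1 - t ^ i\<close> it scales like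
  \<open>i powr r\<close>, as the Laplace transform does under the Tauberian hypothesis. The weight is not
  integrable near \<open>y = 0\<close>, so only functions vanishing at \<open>t = 1\<close> are integrable: hence all
  approximating polynomials below vanish at \<open>1\<close>.\<close>

definition karamata_integrable :: "real \<Rightarrow> (real \<Rightarrow> real) \<Rightarrow> bool" where
  "karamata_integrable r f \<longleftrightarrow> set_integrable lborel {0<..} (\<lambda>y. f (exp (- y)) * y powr (- r - 1))"

definition karamata_integral :: "real \<Rightarrow> (real \<Rightarrow> real) \<Rightarrow> real" where
  "karamata_integral r f = (LINT y:{0<..}|lborel. f (exp (- y)) * y powr (- r - 1))"

lemma karamata_integrable_one_minus:
  assumes "0 < r" "r < 1"
  shows "karamata_integrable r (\<lambda>t. 1 - t)"
proof -
  let ?f = "\<lambda>y::real. (1 - exp (- y)) * y powr (- r - 1)"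
  have meas: "set_borel_measurable lborel A ?f" if "A \<in> sets borel" for A
    unfolding set_borel_measurable_def using that by measurable
  have near_0: "set_integrable lborel {0<..<1} ?f"
  proof (rule set_integrable_bound[OF set_integral_powr_at_0(1)[of "- r" 1]])
    show "AE y in lborel. y \<in> {0<..<1} \<longrightarrow> norm (?f y) \<le> norm (y powr - r)"
    proof (intro AE_I2 impI)
      fix y :: real assume y: "y \<in> {0<..<1}"
      have "1 - exp (- y) \<le> y" using exp_ge_add_one_self[of "- y"] by simp
      then have "?f y \<le> y * y powr (- r - 1)" by (intro mult_right_mono) auto
      also have "\<dots> = y powr (- r)" using y by (simp add: powr_mult_base)
      finally show "norm (?f y) \<le> norm (y powr - r)" using y by simp
    qed
  qed (use assms meas in auto)
  have near_inf: "set_integrable lborel {1/2<..} ?f"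
  proof (rule set_integrable_bound[OF set_integral_powr_at_top(1)[of "- r - 1" "1/2"]])
    show "AE y in lborel. y \<in> {1/2<..} \<longrightarrow> norm (?f y) \<le> norm (y powr (- r - 1))"
      by (intro AE_I2 impI) (auto simp: mult_left_le_one_le)
  qed (use assms meas in auto)
  have "{0<..<1} \<union> {1/2<..} = {0::real<..}" by auto
  then show ?thesis
    using set_integrable_Un[OF near_0 near_inf] by (simp add: karamata_integrable_def)
qed

lemma karamata_integral_one_minus_power:
  assumes "0 < r" "r < 1"
  shows "karamata_integrable r (\<lambda>t. 1 - t ^ i)"
    and "karamata_integral r (\<lambda>t. 1 - t ^ i) = real i powr r * karamata_integral r (\<lambda>t. 1 - t)"
proof -
  define c where "c = real i"
  define f where "f = (\<lambda>y::real. indicator {0<..} y * ((1 - exp (- y)) * y powr (- r - 1)))"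
  have f: "integrable lborel f"
    using karamata_integrable_one_minus[OF assms]
    by (simp add: f_def karamata_integrable_def set_integrable_def)
  have "karamata_integrable r (\<lambda>t. 1 - t ^ i) \<and>
      karamata_integral r (\<lambda>t. 1 - t ^ i) = c powr r * karamata_integral r (\<lambda>t. 1 - t)"
  proof (cases "i = 0")
    case True
    then show ?thesis
      by (simp add: c_def karamata_integrable_def karamata_integral_def set_integrable_def)
  next
    case False
    then have c: "c > 0" by (simp add: c_def)
    have scale: "indicator {0<..} y * ((1 - exp (- y) ^ i) * y powr (- r - 1))
        = c powr (r + 1) * f (0 + c * y)" for y
    proof -
      have "exp (- y) ^ i = exp (- (c * y))"
        by (simp add: c_def exp_of_nat_mult[symmetric])
      then show ?thesis
        using c by (auto simp: f_def indicator_def zero_less_mult_iff powr_mult powr_add[symmetric])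
    qed
    have "integrable lborel (\<lambda>y. f (0 + c * y))"
      using c by (intro lborel_integrable_real_affine f) simp
    then have integrable: "karamata_integrable r (\<lambda>t. 1 - t ^ i)"
      by (simp add: karamata_integrable_def set_integrable_def scale)
    have "karamata_integral r (\<lambda>t. 1 - t ^ i) = c powr (r + 1) * (LBINT y. f (0 + c * y))"
      unfolding karamata_integral_def set_lebesgue_integral_def real_scaleR_def scale by simp
    also have "(LBINT y. f (0 + c * y)) = integral\<^sup>L lborel f / c"
      using lborel_integral_real_affine[of c f 0] c by simp
    also have "integral\<^sup>L lborel f = karamata_integral r (\<lambda>t. 1 - t)"
      by (simp add: karamata_integral_def set_lebesgue_integral_def f_def)
    finally have "karamata_integral r (\<lambda>t. 1 - t ^ i) = c powr r * karamata_integral r (\<lambda>t. 1 - t)"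
      using c by (simp add: powr_add)
    with integrable show ?thesis ..
  qed
  then show "karamata_integrable r (\<lambda>t. 1 - t ^ i)"
    and "karamata_integral r (\<lambda>t. 1 - t ^ i) = real i powr r * karamata_integral r (\<lambda>t. 1 - t)"
    by (simp_all add: c_def)
qed

lemma karamata_integral_mono:
  assumes "karamata_integrable r f" "karamata_integrable r g"
    and "\<And>t. t \<in> {0<..<1} \<Longrightarrow> f t \<le> g t"
  shows "karamata_integral r f \<le> karamata_integral r g"
  unfolding karamata_integral_def
proof (rule set_integral_mono)
  fix y :: real assume "y \<in> {0<..}"
  then have "exp (- y) \<in> {0<..<1}" by auto
  then show "f (exp (- y)) * y powr (- r - 1) \<le> g (exp (- y)) * y powr (- r - 1)"
    by (intro mult_right_mono assms(3)) auto
qed (use assms(1,2) in \<open>simp_all add: karamata_integrable_def\<close>)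

lemma karamata_integral_lincomb:
  assumes "karamata_integrable r f" "karamata_integrable r g"
  shows "karamata_integrable r (\<lambda>t. a * f t + b * g t)"
    and "karamata_integral r (\<lambda>t. a * f t + b * g t)
           = a * karamata_integral r f + b * karamata_integral r g"
proof -
  have distrib: "(a * f t + b * g t) * w = a * (f t * w) + b * (g t * w)" for t w :: real
    by (simp add: algebra_simps)
  show "karamata_integrable r (\<lambda>t. a * f t + b * g t)"
    using assms unfolding karamata_integrable_def distrib
    by (intro set_integral_add(1) set_integrable_mult_right)
  show "karamata_integral r (\<lambda>t. a * f t + b * g t)
      = a * karamata_integral r f + b * karamata_integral r g"
    using assms unfolding karamata_integrable_def karamata_integral_def distrib
    by (simp add: set_integral_add(2) set_integrable_mult_right)
qed

lemma karamata_integral_diff_le: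
  assumes r: "0 < r" "r < 1"
    and int: "karamata_integrable r p" "karamata_integrable r q" "karamata_integrable r w"
    and le: "\<And>t. t \<in> {0<..<1} \<Longrightarrow> q t - p t \<le> w t + e * (1 - t)"
  shows "karamata_integral r q - karamata_integral r p
           \<le> karamata_integral r w + e * karamata_integral r (\<lambda>t. 1 - t)"
proof -
  note one_minus = karamata_integrable_one_minus[OF r]
  have "karamata_integral r q - karamata_integral r p = karamata_integral r (\<lambda>t. 1 * q t + - 1 * p t)"
    by (subst karamata_integral_lincomb(2)[OF int(2,1)]) simp
  also have "\<dots> \<le> karamata_integral r (\<lambda>t. 1 * w t + e * (1 - t))"
    by (rule karamata_integral_mono[OF karamata_integral_lincomb(1)[OF int(2,1)]
          karamata_integral_lincomb(1)[OF int(3) one_minus]]) (use le in simp)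
  also have "\<dots> = karamata_integral r w + e * karamata_integral r (\<lambda>t. 1 - t)"
    by (subst karamata_integral_lincomb(2)[OF int(3) one_minus]) simp
  finally show ?thesis .
qed

lemma karamata_integral_indicator:
  assumes "0 < r"
  shows "karamata_integrable r (indicator {..<exp (- 1)})"
    and "karamata_integral r (indicator {..<exp (- 1)}) = 1 / r"
proof -
  have tail: "indicator {0<..} y * (indicator {..<exp (- 1)} (exp (- y)) * y powr (- r - 1))
      = indicator {1<..} y * y powr (- r - 1)" for y :: real
    by (auto simp: indicator_def)
  show "karamata_integrable r (indicator {..<exp (- 1)})"
    using set_integral_powr_at_top(1)[of "- r - 1" 1] assms
    by (simp add: karamata_integrable_def set_integrable_def tail)
  show "karamata_integral r (indicator {..<exp (- 1)}) = 1 / r"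
    using set_integral_powr_at_top(2)[of "- r - 1" 1] assms
    by (simp add: karamata_integral_def set_lebesgue_integral_def tail)
qed

lemma karamata_integral_one_minus_pos:
  assumes "0 < r" "r < 1"
  shows "karamata_integral r (\<lambda>t. 1 - t) > 0"
proof -
  have "0 < (1 - exp (- 1)) / r" using assms by simp
  also have "\<dots> = karamata_integral r (\<lambda>t. (1 - exp (- 1)) * indicator {..<exp (- 1)} t)"
    using karamata_integral_indicator[OF assms(1)]
    by (simp add: karamata_integral_def mult.assoc)
  also have "\<dots> \<le> karamata_integral r (\<lambda>t. 1 - t)"
  proof (rule karamata_integral_mono)
    show "karamata_integrable r (\<lambda>t. (1 - exp (- 1)) * indicator {..<exp (- 1)} t)"
      using karamata_integral_indicator(1)[OF assms(1)]
      by (simp add: karamata_integrable_def mult.assoc set_integrable_mult_right)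
  qed (use karamata_integrable_one_minus[OF assms] in \<open>auto simp: indicator_def\<close>)
  finally show ?thesis .
qed

lemma karamata_integral_window:
  assumes r: "0 < r" and ab: "0 < a" "a < b" "b < 1"
  shows "karamata_integrable r (indicator {a<..<b})"
    and "karamata_integral r (indicator {a<..<b}) = ((- ln b) powr (- r) - (- ln a) powr (- r)) / r"
proof -
  define \<alpha> \<beta> where "\<alpha> = - ln b" and "\<beta> = - ln a"
  have \<alpha>\<beta>: "0 < \<alpha>" "\<alpha> < \<beta>" using ab by (auto simp: \<alpha>_def \<beta>_def)
  have window: "indicator {0<..} y * (indicator {a<..<b} (exp (- y)) * y powr (- r - 1))
      = indicator {\<alpha><..<\<beta>} y * y powr (- r - 1)" for y
  proof -
    have "a < exp (- y) \<longleftrightarrow> ln a < ln (exp (- y))" "exp (- y) < b \<longleftrightarrow> ln (exp (- y)) < ln b"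
      using ab by (subst ln_less_cancel_iff; simp)+
    then have "exp (- y) \<in> {a<..<b} \<longleftrightarrow> y \<in> {\<alpha><..<\<beta>}" by (auto simp: \<alpha>_def \<beta>_def)
    then show ?thesis using \<alpha>\<beta> by (auto simp: indicator_def)
  qed
  have cont: "continuous_on {\<alpha>..\<beta>} (\<lambda>y. y powr (- r - 1))"
    using \<alpha>\<beta> by (intro continuous_intros) auto
  have "interval_lebesgue_integrable lborel \<alpha> \<beta> (\<lambda>y. y powr (- r - 1))"
    using \<alpha>\<beta> cont by (intro interval_integrable_continuous_on) auto
  then show "karamata_integrable r (indicator {a<..<b})"
    using \<alpha>\<beta> by (simp add: karamata_integrable_def set_integrable_def window
        interval_lebesgue_integrable_def)
  have "(LBINT y=\<alpha>..\<beta>. y powr (- r - 1)) = (- (\<beta> powr (- r) / r)) - (- (\<alpha> powr (- r) / r))"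
  proof (rule interval_integral_FTC_finite)
    show "continuous_on {min \<alpha> \<beta>..max \<alpha> \<beta>} (\<lambda>y. y powr (- r - 1))" using cont \<alpha>\<beta> by simp
    fix y assume "min \<alpha> \<beta> \<le> y"
    then have "0 < y" using \<alpha>\<beta> by simp
    then have "((\<lambda>y. - (y powr (- r) / r)) has_real_derivative y powr (- r - 1)) (at y)"
      using r by (auto intro!: derivative_eq_intros simp: powr_diff)
    then show "((\<lambda>y. - (y powr (- r) / r)) has_vector_derivative y powr (- r - 1))
        (at y within {min \<alpha> \<beta>..max \<alpha> \<beta>})"
      by (simp add: has_real_derivative_iff_has_vector_derivative has_vector_derivative_at_within)
  qed
  then show "karamata_integral r (indicator {a<..<b}) = ((- ln b) powr (- r) - (- ln a) powr (- r)) / r"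
    using \<alpha>\<beta> by (simp add: karamata_integral_def set_lebesgue_integral_def window
        interval_lebesgue_integral_def diff_divide_distrib flip: \<alpha>_def \<beta>_def)
qed

lemma karamata_integral_window_small:
  assumes r: "0 < r" and \<epsilon>: "\<epsilon> > 0" and c: "0 < c" "c < 1"
  obtains \<delta> where "0 < \<delta>" "\<delta> < c" "c + \<delta> < 1"
    and "karamata_integrable r (indicator {c - \<delta><..<c + \<delta>})"
    and "karamata_integral r (indicator {c - \<delta><..<c + \<delta>}) < \<epsilon>"
proof -
  define W where "W \<delta> = ((- ln (c + \<delta>)) powr (- r) - (- ln (c - \<delta>)) powr (- r)) / r" for \<delta>
  have "(W \<longlongrightarrow> ((- ln (c + 0)) powr (- r) - (- ln (c - 0)) powr (- r)) / r) (at_right 0)"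
    unfolding W_def using c r by (intro tendsto_intros) auto
  then have "\<forall>\<^sub>F \<delta> in at_right 0. W \<delta> < \<epsilon>"
    using \<epsilon> by (intro order_tendstoD(2)) auto
  moreover have "\<forall>\<^sub>F \<delta> in at_right 0. \<delta> < min c (1 - c)"
    unfolding eventually_at_right_field using c by (intro exI[of _ "min c (1 - c)"]) auto
  ultimately have ev: "\<forall>\<^sub>F \<delta> in at_right 0. W \<delta> < \<epsilon> \<and> 0 < \<delta> \<and> \<delta> < min c (1 - c)"
    using eventually_at_right_less[of "0::real"] by eventually_elim auto
  then obtain \<delta> where "W \<delta> < \<epsilon>" "0 < \<delta>" "\<delta> < c" "c + \<delta> < 1"
    using eventually_happens'[OF _ ev] by auto
  with karamata_integral_window[OF r, of "c - \<delta>" "c + \<delta>"] show ?thesis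
    by (intro that) (auto simp: W_def)
qed

lemma karamata_integral_sum_one_minus_power:
  assumes "0 < r" "r < 1"
  shows "karamata_integrable r (\<lambda>t. \<Sum>i\<le>n. b i * (1 - t ^ i))"
    and "karamata_integral r (\<lambda>t. \<Sum>i\<le>n. b i * (1 - t ^ i))
           = karamata_integral r (\<lambda>t. 1 - t) * (\<Sum>i\<le>n. b i * real i powr r)"
proof -
  note power = karamata_integral_one_minus_power[OF assms]
  have expand: "indicator {0<..} y *\<^sub>R ((\<Sum>i\<le>n. b i * (1 - exp (- y) ^ i)) * y powr (- r - 1))
      = (\<Sum>i\<le>n. b i * (indicator {0<..} y *\<^sub>R ((1 - exp (- y) ^ i) * y powr (- r - 1))))" for y
    by (simp add: sum_distrib_left sum_distrib_right mult_ac)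
  show "karamata_integrable r (\<lambda>t. \<Sum>i\<le>n. b i * (1 - t ^ i))"
    using power(1) unfolding karamata_integrable_def set_integrable_def expand
    by (intro Bochner_Integration.integrable_sum integrable_mult_right) auto
  have "karamata_integral r (\<lambda>t. \<Sum>i\<le>n. b i * (1 - t ^ i))
      = (\<Sum>i\<le>n. b i * karamata_integral r (\<lambda>t. 1 - t ^ i))"
    using power(1) unfolding karamata_integral_def set_lebesgue_integral_def expand
    by (subst Bochner_Integration.integral_sum)
      (auto simp: karamata_integrable_def set_integrable_def)
  then show "karamata_integral r (\<lambda>t. \<Sum>i\<le>n. b i * (1 - t ^ i))
      = karamata_integral r (\<lambda>t. 1 - t) * (\<Sum>i\<le>n. b i * real i powr r)"
    by (simp add: power(2) sum_distrib_left mult_ac)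
qed

lemma real_polynomial_function_vanishing_at_1:
  assumes "real_polynomial_function p" "p 1 = 0"
  obtains b n where "p = (\<lambda>t. \<Sum>i\<le>n. b i * (1 - t ^ i))"
proof -
  obtain a n where a: "p = (\<lambda>t. \<Sum>i\<le>n. a i * t ^ i)"
    using assms(1) real_polynomial_function_iff_sum by auto
  have "(\<Sum>i\<le>n. a i) = 0" using assms(2) by (simp add: a)
  then have "p = (\<lambda>t. \<Sum>i\<le>n. - a i * (1 - t ^ i))"
    by (simp add: a algebra_simps sum_subtractf)
  then show ?thesis by (rule that)
qed

lemma karamata_integrable_poly:
  assumes "0 < r" "r < 1" "real_polynomial_function p" "p 1 = 0"
  shows "karamata_integrable r p"
  using real_polynomial_function_vanishing_at_1[OF assms(3,4)]
    karamata_integral_sum_one_minus_power(1)[OF assms(1,2)] by metis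

lemma real_polynomial_function_one_minus: "real_polynomial_function (\<lambda>t::real. 1 - t)"
  by (intro real_polynomial_function_diff real_polynomial_function.intros(1-2) bounded_linear_ident)

lemma continuous_on_factor_one_minus:
  fixes g :: "real \<Rightarrow> real"
  assumes g: "continuous_on {0..1} g" and d: "d < 1" and vanish: "\<And>t. t \<in> {d..1} \<Longrightarrow> g t = 0"
  obtains h where "continuous_on {0..1} h" "\<And>t. t \<in> {0..1} \<Longrightarrow> g t = (1 - t) * h t"
proof
  show "continuous_on {0..1} (\<lambda>t. g t / (1 - min t d))"
    using d by (intro continuous_intros g) auto
  show "g t = (1 - t) * (g t / (1 - min t d))" if "t \<in> {0..1}" for t
    using that d vanish[of t] by (cases "t \<le> d") (auto simp: min_def)
qed

lemma polynomial_lower_approx_vanishing_at_1: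
  fixes g :: "real \<Rightarrow> real"
  assumes "continuous_on {0..1} g" "d < 1" "\<And>t. t \<in> {d..1} \<Longrightarrow> g t = 0" and e: "e > 0"
  obtains p where "real_polynomial_function p" "p 1 = 0"
    and "\<And>t. t \<in> {0..1} \<Longrightarrow> g t - e * (1 - t) \<le> p t \<and> p t \<le> g t"
proof -
  obtain h where h: "continuous_on {0..1} h" "\<And>t. t \<in> {0..1} \<Longrightarrow> g t = (1 - t) * h t"
    using continuous_on_factor_one_minus assms(1-3) by blast
  obtain w where w: "real_polynomial_function w" "\<And>t. t \<in> {0..1} \<Longrightarrow> \<bar>h t - w t\<bar> < e / 2"
    using Stone_Weierstrass_real_polynomial_function[OF compact_Icc h(1), of "e / 2"] e by auto
  show ?thesis
  proof (rule that[of "\<lambda>t. (1 - t) * (w t - e / 2)"])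
    show "real_polynomial_function (\<lambda>t. (1 - t) * (w t - e / 2))"
      by (intro real_polynomial_function.intros(2,4) real_polynomial_function_diff
          real_polynomial_function_one_minus w(1))
    fix t :: real assume t: "t \<in> {0..1}"
    then have "h t - e \<le> w t - e / 2" "w t - e / 2 \<le> h t"
      using w(2)[OF t] unfolding abs_less_iff by auto
    then have "(1 - t) * (h t - e) \<le> (1 - t) * (w t - e / 2)" "(1 - t) * (w t - e / 2) \<le> (1 - t) * h t"
      using t by (intro mult_left_mono; simp)+
    then show "g t - e * (1 - t) \<le> (1 - t) * (w t - e / 2) \<and> (1 - t) * (w t - e / 2) \<le> g t"
      unfolding h(2)[OF t] by (auto simp: algebra_simps)
  qed simp
qed

lemma continuous_bounds_indicator_lessThan:
  fixes c \<delta> :: real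
  assumes "0 < \<delta>"
  obtains gl gu where "continuous_on UNIV gl" "continuous_on UNIV gu"
    and "\<And>t. c \<le> t \<Longrightarrow> gl t = 0" "\<And>t. c + \<delta> \<le> t \<Longrightarrow> gu t = 0"
    and "\<And>t. gl t \<le> indicator {..<c} t" "\<And>t. indicator {..<c} t \<le> gu t"
    and "\<And>t. gu t - gl t \<le> (indicator {c - \<delta><..<c + \<delta>} t :: real)"
proof -
  define ramp where "ramp a t = min 1 (max 0 ((a - t) / \<delta>))" for a t
  have ramp_0: "ramp a t = 0" if "a \<le> t" for a t
    using that assms by (simp add: ramp_def divide_nonpos_pos)
  have ramp_1: "ramp a t = 1" if "t \<le> a - \<delta>" for a t
    using that assms by (simp add: ramp_def field_simps)
  have ramp_01: "0 \<le> ramp a t" "ramp a t \<le> 1" for a t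
    by (simp_all add: ramp_def)
  show ?thesis
  proof (rule that[of "ramp c" "ramp (c + \<delta>)"])
    show "continuous_on UNIV (ramp c)" "continuous_on UNIV (ramp (c + \<delta>))"
      unfolding ramp_def by (intro continuous_intros; use assms in simp)+
    show "indicator {..<c} t \<le> ramp (c + \<delta>) t" for t
      using ramp_1[of t "c + \<delta>"] ramp_01 by (auto simp: indicator_def)
    show "ramp (c + \<delta>) t - ramp c t \<le> indicator {c - \<delta><..<c + \<delta>} t" for t
      using ramp_0[of "c + \<delta>" t] ramp_1[of t c] ramp_01[of "c + \<delta>" t] ramp_01[of c t]
      by (auto simp: indicator_def)
  qed (use ramp_0 ramp_01 in \<open>auto simp: indicator_def\<close>)
qed

lemma karamata_sandwich:
  assumes r: "0 < r" "r < 1" and \<epsilon>: "\<epsilon> > 0"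
  obtains p q where "real_polynomial_function p" "p 1 = 0" "real_polynomial_function q" "q 1 = 0"
    and "\<And>t. t \<in> {0..1} \<Longrightarrow> p t \<le> indicator {..<exp (- 1)} t"
    and "\<And>t. t \<in> {0..1} \<Longrightarrow> indicator {..<exp (- 1)} t \<le> q t"
    and "karamata_integral r q - karamata_integral r p < \<epsilon>"
proof -
  define c :: real where "c = exp (- 1)"
  define J where "J = karamata_integral r (\<lambda>t. 1 - t)"
  have J: "J > 0" unfolding J_def by (rule karamata_integral_one_minus_pos[OF r])
  obtain \<delta> where \<delta>: "0 < \<delta>" "\<delta> < c" "c + \<delta> < 1"
    and window: "karamata_integrable r (indicator {c - \<delta><..<c + \<delta>})"
      "karamata_integral r (indicator {c - \<delta><..<c + \<delta>}) < \<epsilon> / 2"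
    using karamata_integral_window_small[OF r(1), of "\<epsilon> / 2" c] \<epsilon> by (auto simp: c_def)
  obtain gl gu where gl_gu: "continuous_on UNIV gl" "continuous_on UNIV gu"
    "\<And>t. c \<le> t \<Longrightarrow> gl t = 0" "\<And>t. c + \<delta> \<le> t \<Longrightarrow> gu t = 0"
    "\<And>t. gl t \<le> indicator {..<c} t" "\<And>t. indicator {..<c} t \<le> gu t"
    "\<And>t. gu t - gl t \<le> (indicator {c - \<delta><..<c + \<delta>} t :: real)"
    using continuous_bounds_indicator_lessThan[OF \<delta>(1)] by blast
  define e where "e = \<epsilon> / (4 * J)"
  have e: "e > 0" using \<epsilon> J by (simp add: e_def)
  have cont: "continuous_on {0..1} gl" "continuous_on {0..1} (\<lambda>t. - gu t)"
    using gl_gu(1,2) by (auto intro: continuous_on_subset continuous_on_minus)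
  have vanish: "gl t = 0" "- gu t = 0" if "t \<in> {c + \<delta>..1}" for t
    using that \<delta>(1) gl_gu(3,4) by auto
  obtain p where p: "real_polynomial_function p" "p 1 = 0"
    and p_bounds: "\<And>t. t \<in> {0..1} \<Longrightarrow> gl t - e * (1 - t) \<le> p t \<and> p t \<le> gl t"
    using polynomial_lower_approx_vanishing_at_1[OF cont(1) \<delta>(3) vanish(1) e] by blast
  obtain q' where q': "real_polynomial_function q'" "q' 1 = 0"
    and q'_bounds: "\<And>t. t \<in> {0..1} \<Longrightarrow> - gu t - e * (1 - t) \<le> q' t \<and> q' t \<le> - gu t"
    using polynomial_lower_approx_vanishing_at_1[OF cont(2) \<delta>(3) vanish(2) e] by blast
  define q where "q = (\<lambda>t. - q' t)"
  have q: "real_polynomial_function q" "q 1 = 0"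
    using q' by (auto simp: q_def intro: real_polynomial_function_minus)
  show ?thesis
  proof (rule that[OF p q])
    show "p t \<le> indicator {..<exp (- 1)} t" "indicator {..<exp (- 1)} t \<le> q t" if "t \<in> {0..1}" for t
      using p_bounds[OF that] q'_bounds[OF that] gl_gu(5,6)[of t] by (auto simp: c_def q_def)
    have "q t - p t \<le> indicator {c - \<delta><..<c + \<delta>} t + 2 * e * (1 - t)" if "t \<in> {0<..<1}" for t
      using that p_bounds[of t] q'_bounds[of t] gl_gu(7)[of t] by (auto simp: q_def)
    from karamata_integral_diff_le[OF r karamata_integrable_poly[OF r p] karamata_integrable_poly[OF r q]
        window(1) this]
    have "karamata_integral r q - karamata_integral r p
        \<le> karamata_integral r (indicator {c - \<delta><..<c + \<delta>}) + 2 * e * J"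
      by (simp add: J_def)
    also have "\<dots> < \<epsilon>" using window(2) J by (simp add: e_def)
    finally show "karamata_integral r q - karamata_integral r p < \<epsilon>" .
  qed
qed

lemma integrable_exp_power:
  fixes M :: "real measure"
  assumes "prob_space M" "sets M = sets borel" "AE x in M. 0 \<le> x" "0 \<le> s"
  shows "integrable M (\<lambda>x. exp (- s * x) ^ i)"
proof -
  interpret prob_space M by fact
  have [measurable_cong]: "sets M = sets borel" by fact
  show ?thesis
  proof (rule integrable_const_bound[where B = 1])
    show "AE x in M. norm (exp (- s * x) ^ i) \<le> 1"
      using assms(3) by eventually_elim (use assms(4) in \<open>auto simp: power_le_one\<close>)
  qed measurable
qed

lemma integrable_poly_exp:
  fixes M :: "real measure"
  assumes "prob_space M" "sets M = sets borel" "AE x in M. 0 \<le> x" "0 \<le> s"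
    and "real_polynomial_function p"
  shows "integrable M (\<lambda>x. p (exp (- s * x)))"
proof -
  obtain a n where "p = (\<lambda>t. \<Sum>i\<le>n. a i * t ^ i)"
    using assms(5) real_polynomial_function_iff_sum by auto
  then show ?thesis
    using integrable_exp_power[OF assms(1-4)] by simp
qed

lemma integral_exp_mono:
  fixes M :: "real measure" and f g :: "real \<Rightarrow> real"
  assumes "AE x in M. 0 \<le> x" "0 \<le> s"
    and "integrable M (\<lambda>x. f (exp (- s * x)))" "integrable M (\<lambda>x. g (exp (- s * x)))"
    and "\<And>t. t \<in> {0..1} \<Longrightarrow> f t \<le> g t"
  shows "(\<integral>x. f (exp (- s * x)) \<partial>M) \<le> (\<integral>x. g (exp (- s * x)) \<partial>M)"
proof (rule integral_mono_AE[OF assms(3,4)])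
  show "AE x in M. f (exp (- s * x)) \<le> g (exp (- s * x))"
    using assms(1) by eventually_elim (use assms(2,5) in auto)
qed

lemma laplace_limit_nonneg:
  fixes M :: "real measure"
  assumes M: "prob_space M" "sets M = sets borel" "AE x in M. 0 \<le> x"
    and lim: "((\<lambda>s. (1 - (\<integral>x. exp (- s * x) \<partial>M)) / s powr r) \<longlongrightarrow> K) (at_right 0)"
  shows "0 \<le> K"
proof (rule tendsto_lowerbound[OF lim])
  interpret prob_space M by fact
  have nonneg: "0 \<le> (1 - (\<integral>x. exp (- s * x) \<partial>M)) / s powr r" if "0 < s" for s
  proof -
    have "(\<integral>x. exp (- s * x) \<partial>M) \<le> 1"
    proof (rule integral_le_const)
      show "integrable M (\<lambda>x. exp (- s * x))"
        using integrable_exp_power[OF M, of s 1] that by simp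
      show "AE x in M. exp (- s * x) \<le> 1"
        using M(3) by eventually_elim (use that in simp)
    qed
    then show ?thesis by simp
  qed
  show "\<forall>\<^sub>F s in at_right 0. 0 \<le> (1 - (\<integral>x. exp (- s * x) \<partial>M)) / s powr r"
    using eventually_at_right_less[of "0::real"] by (rule eventually_mono) (rule nonneg)
qed simp

lemma laplace_poly_limit:
  fixes M :: "real measure" and p :: "real \<Rightarrow> real"
  assumes M: "prob_space M" "sets M = sets borel" "AE x in M. 0 \<le> x"
    and r: "0 < r" "r < 1"
    and lim: "((\<lambda>s. (1 - (\<integral>x. exp (- s * x) \<partial>M)) / s powr r) \<longlongrightarrow> K) (at_right 0)"
    and p: "real_polynomial_function p" "p 1 = 0"
  shows "((\<lambda>s. (\<integral>x. p (exp (- s * x)) \<partial>M) / s powr r)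
           \<longlongrightarrow> K / karamata_integral r (\<lambda>t. 1 - t) * karamata_integral r p) (at_right 0)"
proof -
  interpret prob_space M by fact
  obtain b n where pb: "p = (\<lambda>t. \<Sum>i\<le>n. b i * (1 - t ^ i))"
    using real_polynomial_function_vanishing_at_1[OF p] by blast
  have power_limit: "((\<lambda>s. (1 - (\<integral>x. exp (- s * x) ^ i \<partial>M)) / s powr r)
      \<longlongrightarrow> real i powr r * K) (at_right 0)" for i
  proof (cases "i = 0")
    case False
    have "exp (- s * x) ^ i = exp (- (real i * s) * x)" for s x
      by (simp add: exp_of_nat_mult[symmetric])
    then show ?thesis
      using tendsto_rescale_at_right_0[OF lim, of "real i"] False by simp
  qed (simp add: prob_space)
  have eq: "(\<integral>x. p (exp (- s * x)) \<partial>M) / s powr r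
      = (\<Sum>i\<le>n. b i * ((1 - (\<integral>x. exp (- s * x) ^ i \<partial>M)) / s powr r))" if "0 < s" for s
  proof -
    have "integrable M (\<lambda>x. exp (- s * x) ^ i)" for i
      using that by (intro integrable_exp_power[OF M]) simp
    then have "(\<integral>x. p (exp (- s * x)) \<partial>M) = (\<Sum>i\<le>n. b i * (1 - (\<integral>x. exp (- s * x) ^ i \<partial>M)))"
      unfolding pb by (simp add: Bochner_Integration.integral_sum prob_space)
    then show ?thesis by (simp add: sum_divide_distrib)
  qed
  have "\<forall>\<^sub>F s in at_right 0. (\<Sum>i\<le>n. b i * ((1 - (\<integral>x. exp (- s * x) ^ i \<partial>M)) / s powr r))
      = (\<integral>x. p (exp (- s * x)) \<partial>M) / s powr r"
    using eventually_at_right_less[of "0::real"] by (rule eventually_mono) (rule eq[symmetric])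
  moreover have "((\<lambda>s. \<Sum>i\<le>n. b i * ((1 - (\<integral>x. exp (- s * x) ^ i \<partial>M)) / s powr r))
      \<longlongrightarrow> (\<Sum>i\<le>n. b i * (real i powr r * K))) (at_right 0)"
    by (intro tendsto_intros power_limit)
  ultimately have "((\<lambda>s. (\<integral>x. p (exp (- s * x)) \<partial>M) / s powr r)
      \<longlongrightarrow> (\<Sum>i\<le>n. b i * (real i powr r * K))) (at_right 0)"
    by (rule Lim_transform_eventually[rotated])
  moreover have "karamata_integral r p = karamata_integral r (\<lambda>t. 1 - t) * (\<Sum>i\<le>n. b i * real i powr r)"
    unfolding pb by (rule karamata_integral_sum_one_minus_power(2)[OF r])
  ultimately show ?thesis
    using karamata_integral_one_minus_pos[OF r] by (simp add: sum_distrib_left mult_ac)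
qed

lemma tail_eq_integral_indicator_exp:
  fixes M :: "real measure"
  assumes M: "prob_space M" "sets M = sets borel" and s: "0 < s"
  shows "integrable M (\<lambda>x. indicator {..<exp (- 1)} (exp (- s * x)) :: real)"
    and "measure M {1/s<..} = (\<integral>x. indicator {..<exp (- 1)} (exp (- s * x)) \<partial>M)"
proof -
  interpret prob_space M by fact
  have [measurable_cong]: "sets M = sets borel" by (rule M(2))
  show "integrable M (\<lambda>x. indicator {..<exp (- 1)} (exp (- s * x)) :: real)"
    by (rule integrable_const_bound[where B = 1]) auto
  have "indicator {..<exp (- 1)} (exp (- s * x)) = (indicator {1/s<..} x :: real)" for x
    using s by (auto simp: indicator_def field_simps)
  then show "measure M {1/s<..} = (\<integral>x. indicator {..<exp (- 1)} (exp (- s * x)) \<partial>M)"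
    by (simp add: M(2) sets_eq_imp_space_eq[OF M(2)])
qed

lemma tail_between_poly_laplace:
  fixes M :: "real measure" and p q :: "real \<Rightarrow> real"
  assumes M: "prob_space M" "sets M = sets borel" "AE x in M. 0 \<le> x" and s: "0 < s"
    and p: "real_polynomial_function p" "\<And>t. t \<in> {0..1} \<Longrightarrow> p t \<le> indicator {..<exp (- 1)} t"
    and q: "real_polynomial_function q" "\<And>t. t \<in> {0..1} \<Longrightarrow> indicator {..<exp (- 1)} t \<le> q t"
  shows "(\<integral>x. p (exp (- s * x)) \<partial>M) \<le> measure M {1/s<..}"
    and "measure M {1/s<..} \<le> (\<integral>x. q (exp (- s * x)) \<partial>M)"
  unfolding tail_eq_integral_indicator_exp(2)[OF M(1,2) s] using s
  by (intro integral_exp_mono[OF M(3)] integrable_poly_exp[OF M] p q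
      tail_eq_integral_indicator_exp(1)[OF M(1,2) s]; simp)+

text \<open>As \<open>karamata_integral r (\<lambda>t. 1 - t) = Gamma (1 - r) / r\<close>, the limit below is the classical
  constant \<open>K / Gamma (1 - r)\<close>.\<close>

theorem karamata_tauberian:
  fixes M :: "real measure"
  assumes M: "prob_space M" "sets M = sets borel" "AE x in M. 0 \<le> x"
    and r: "0 < r" "r < 1"
    and lim: "((\<lambda>s. (1 - (\<integral>x. exp (- s * x) \<partial>M)) / s powr r) \<longlongrightarrow> K) (at_right 0)"
  shows "((\<lambda>s. measure M {1/s<..} / s powr r)
           \<longlongrightarrow> K / (r * karamata_integral r (\<lambda>t. 1 - t))) (at_right 0)"
proof -
  define J where "J = karamata_integral r (\<lambda>t. 1 - t)"
  have J: "J > 0" unfolding J_def by (rule karamata_integral_one_minus_pos[OF r])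
  have "((\<lambda>s. measure M {1/s<..} / s powr r) \<longlongrightarrow> K / J * (1 / r)) (at_right 0)"
  proof (rule tendsto_squeeze_approx)
    show "0 \<le> K / J" using laplace_limit_nonneg[OF M lim] J by simp
    fix \<epsilon> :: real assume "\<epsilon> > 0"
    then obtain p q where p: "real_polynomial_function p" "p 1 = 0"
      and q: "real_polynomial_function q" "q 1 = 0"
      and below: "\<And>t. t \<in> {0..1} \<Longrightarrow> p t \<le> indicator {..<exp (- 1)} t"
      and above: "\<And>t. t \<in> {0..1} \<Longrightarrow> indicator {..<exp (- 1)} t \<le> q t"
      and gap: "karamata_integral r q - karamata_integral r p < \<epsilon>"
      using karamata_sandwich[OF r] by blast
    let ?T = "\<lambda>s. measure M {1/s<..} / s powr r"
    let ?lo = "\<lambda>s. (\<integral>x. p (exp (- s * x)) \<partial>M) / s powr r"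
    let ?hi = "\<lambda>s. (\<integral>x. q (exp (- s * x)) \<partial>M) / s powr r"
    have "\<forall>\<^sub>F s in at_right 0. ?lo s \<le> ?T s \<and> ?T s \<le> ?hi s"
      using eventually_at_right_less[of "0::real"]
    proof (rule eventually_mono)
      fix s :: real assume "0 < s"
      from tail_between_poly_laplace[OF M this p(1) below q(1) above]
      show "?lo s \<le> ?T s \<and> ?T s \<le> ?hi s" by (simp add: divide_right_mono)
    qed
    moreover have "karamata_integral r p \<le> 1 / r" "1 / r \<le> karamata_integral r q"
      using karamata_integral_mono[OF karamata_integrable_poly[OF r p] karamata_integral_indicator(1)[OF r(1)]]
        karamata_integral_mono[OF karamata_integral_indicator(1)[OF r(1)] karamata_integrable_poly[OF r q]]
        below above karamata_integral_indicator(2)[OF r(1)] by simp_all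
    ultimately show "\<exists>lo hi a b. (\<forall>\<^sub>F s in at_right 0. lo s \<le> ?T s \<and> ?T s \<le> hi s) \<and>
        (lo \<longlongrightarrow> K / J * a) (at_right 0) \<and> (hi \<longlongrightarrow> K / J * b) (at_right 0) \<and>
        a \<le> 1 / r \<and> 1 / r \<le> b \<and> b - a < \<epsilon>"
      using laplace_poly_limit[OF M r lim p, folded J_def] laplace_poly_limit[OF M r lim q, folded J_def] gap
      by (intro exI[of _ ?lo] exI[of _ ?hi] exI[of _ "karamata_integral r p"] exI[of _ "karamata_integral r q"]
          conjI) auto
  qed
  then show ?thesis by (simp add: J_def mult.commute)
qed

lemma tail_asymp_equiv_at_top:
  fixes M :: "real measure"
  assumes M: "prob_space M" "sets M = sets borel"
    and lim: "((\<lambda>s. measure M {1/s<..} / s powr r) \<longlongrightarrow> C) (at_right 0)" and C: "C \<noteq> 0"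
  shows "(\<lambda>x. 1 - cdf M x) \<sim>[at_top] (\<lambda>x. C * x powr (- r))"
proof -
  interpret prob_space M by fact
  have tail: "measure M {1 / inverse x<..} / inverse x powr r = (1 - cdf M x) / x powr (- r)"
    if "0 < x" for x
  proof -
    have "1 - cdf M x = prob (space M - {..x})"
      using M(2) by (simp add: cdf_def prob_compl)
    also have "space M - {..x} = {x<..}"
      using sets_eq_imp_space_eq[OF M(2)] by auto
    finally show ?thesis
      using that by (simp add: inverse_powr powr_minus divide_inverse)
  qed
  have "((\<lambda>x. measure M {1 / inverse x<..} / inverse x powr r) \<longlongrightarrow> C) at_top"
    using filterlim_compose[OF lim filterlim_inverse_at_right_top] .
  moreover have "\<forall>\<^sub>F x in at_top. measure M {1 / inverse x<..} / inverse x powr r = (1 - cdf M x) / x powr (- r)"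
    using eventually_gt_at_top[of "0::real"] by (rule eventually_mono) (rule tail)
  ultimately have "((\<lambda>x. (1 - cdf M x) / x powr (- r)) \<longlongrightarrow> C) at_top"
    by (rule Lim_transform_eventually)
  then show ?thesis using C by (intro asymp_equivI'_const) auto
qed

section \<open>Behaviour of \<open>Phi\<close> at zero\<close>

lemma incBeta_bounds:
  fixes a v x :: real
  assumes a: "0 < a" and x: "0 < x" "x < 1"
  shows "min 1 ((1 - x) powr (v - 1)) * (x powr a / a) \<le> incBeta x a v"
    and "incBeta x a v \<le> max 1 ((1 - x) powr (v - 1)) * (x powr a / a)"
proof -
  define m M where "m = min 1 ((1 - x) powr (v - 1))" and "M = max 1 ((1 - x) powr (v - 1))"
  have between: "m \<le> (1 - t) powr (v - 1) \<and> (1 - t) powr (v - 1) \<le> M" if "t \<in> {0<..<x}" for t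
  proof (cases "v \<ge> 1")
    case True
    then have "(1 - x) powr (v - 1) \<le> (1 - t) powr (v - 1)" "(1 - t) powr (v - 1) \<le> 1"
      using that x by (auto intro: powr_mono2 powr_le1)
    then show ?thesis by (auto simp: m_def M_def)
  next
    case False
    have "(1 - t) powr (v - 1) \<le> (1 - x) powr (v - 1)"
      using False that x by (intro powr_mono2') auto
    moreover have "1 powr (v - 1) \<le> (1 - t) powr (v - 1)"
      using False that x by (intro powr_mono2') auto
    ultimately show ?thesis by (auto simp: m_def M_def)
  qed
  have m: "0 \<le> m" by (simp add: m_def)
  note power = set_integral_powr_at_0[of "a - 1" x]
  have P: "set_integrable lborel {0<..<x} (\<lambda>t. t powr (a - 1))"
    and Pv: "(LINT t:{0<..<x}|lborel. t powr (a - 1)) = x powr a / a"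
    using power a x by simp_all
  have I: "set_integrable lborel {0<..<x} (\<lambda>t. t powr (a - 1) * (1 - t) powr (v - 1))"
  proof (rule set_integrable_bound[OF set_integrable_mult_right[OF P, of M]])
    show "AE t in lborel. t \<in> {0<..<x} \<longrightarrow>
        norm (t powr (a - 1) * (1 - t) powr (v - 1)) \<le> norm (M * t powr (a - 1))"
      using between m by (intro AE_I2 impI) (auto simp: mult.commute intro!: mult_left_mono order_trans[OF _ abs_ge_self])
  qed (auto simp: set_borel_measurable_def)
  have eq: "incBeta x a v = (LINT t:{0<..<x}|lborel. t powr (a - 1) * (1 - t) powr (v - 1))"
    using x by (simp add: incBeta_def interval_lebesgue_integral_def zero_ereal_def)
  have "(LINT t:{0<..<x}|lborel. m * t powr (a - 1)) \<le> incBeta x a v"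
    unfolding eq using between
    by (intro set_integral_mono[OF set_integrable_mult_right[OF P] I]) (auto simp: mult.commute intro: mult_left_mono)
  then show "m * (x powr a / a) \<le> incBeta x a v" using Pv by simp
  have "incBeta x a v \<le> (LINT t:{0<..<x}|lborel. M * t powr (a - 1))"
    unfolding eq using between
    by (intro set_integral_mono[OF I set_integrable_mult_right[OF P]]) (auto simp: mult.commute intro: mult_left_mono)
  then show "incBeta x a v \<le> M * (x powr a / a)" using Pv by simp
qed

lemma incBeta_asymp_at_0:
  fixes a v :: real
  assumes a: "0 < a"
  shows "((\<lambda>x. incBeta x a v / x powr a) \<longlongrightarrow> 1 / a) (at_right 0)"
proof (rule tendsto_sandwich)
  have small: "\<forall>\<^sub>F x in at_right (0::real). 0 < x \<and> x < 1"
    unfolding eventually_at_right_field by (intro exI[of _ 1]) auto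
  show "\<forall>\<^sub>F x in at_right 0. min 1 ((1 - x) powr (v - 1)) / a \<le> incBeta x a v / x powr a"
    using small by eventually_elim (use incBeta_bounds(1)[OF a] in \<open>auto simp: field_simps\<close>)
  show "\<forall>\<^sub>F x in at_right 0. incBeta x a v / x powr a \<le> max 1 ((1 - x) powr (v - 1)) / a"
    using small by eventually_elim (use incBeta_bounds(2)[OF a] in \<open>auto simp: field_simps\<close>)
  have "((\<lambda>x. (1 - x) powr (v - 1)) \<longlongrightarrow> (1 - 0) powr (v - 1)) (at_right (0::real))"
    by (intro tendsto_intros) auto
  then have one: "((\<lambda>x. (1 - x) powr (v - 1)) \<longlongrightarrow> 1) (at_right (0::real))" by simp
  show "((\<lambda>x. min 1 ((1 - x) powr (v - 1)) / a) \<longlongrightarrow> 1 / a) (at_right 0)"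
    using tendsto_divide[OF tendsto_min[OF tendsto_const[of "1::real"] one], of "\<lambda>_. a" a] a by simp
  show "((\<lambda>x. max 1 ((1 - x) powr (v - 1)) / a) \<longlongrightarrow> 1 / a) (at_right 0)"
    using tendsto_divide[OF tendsto_max[OF tendsto_const[of "1::real"] one], of "\<lambda>_. a" a] a by simp
qed

lemma regIncBeta_asymp_at_0:
  fixes a v :: real
  assumes a: "0 < a"
  shows "((\<lambda>s. regIncBeta (s / (s + 1)) a v / s powr a) \<longlongrightarrow> 1 / (a * Beta a v)) (at_right 0)"
proof -
  have "filterlim (\<lambda>s::real. s / (s + 1)) (at_right 0) (at_right 0)"
  proof -
    have "((\<lambda>s::real. s / (s + 1)) \<longlongrightarrow> 0 / (0 + 1)) (at_right 0)" by (intro tendsto_intros) auto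
    moreover have "\<forall>\<^sub>F s in at_right (0::real). s / (s + 1) \<in> {0<..}"
      using eventually_at_right_less[of "0::real"] by (rule eventually_mono) simp
    ultimately show ?thesis by (simp add: filterlim_at_withinI)
  qed
  note incBeta = filterlim_compose[OF incBeta_asymp_at_0[OF a] this]
  have "((\<lambda>s::real. (s + 1) powr (- a)) \<longlongrightarrow> (0 + 1) powr (- a)) (at_right 0)"
    by (intro tendsto_intros) auto
  from tendsto_mult[OF tendsto_mult[OF this incBeta] tendsto_const[of "inverse (Beta a v)"]]
  have "((\<lambda>s. (s + 1) powr (- a) * (incBeta (s / (s + 1)) a v / (s / (s + 1)) powr a)
      * inverse (Beta a v)) \<longlongrightarrow> (0 + 1) powr (- a) * (1 / a) * inverse (Beta a v)) (at_right 0)" .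
  moreover have "\<forall>\<^sub>F s in at_right 0.
      (s + 1) powr (- a) * (incBeta (s / (s + 1)) a v / (s / (s + 1)) powr a) * inverse (Beta a v)
      = regIncBeta (s / (s + 1)) a v / s powr a"
    using eventually_at_right_less[of "0::real"]
    by (rule eventually_mono) (simp add: regIncBeta_def powr_divide powr_minus field_simps)
  ultimately have "((\<lambda>s. regIncBeta (s / (s + 1)) a v / s powr a)
      \<longlongrightarrow> (0 + 1) powr (- a) * (1 / a) * inverse (Beta a v)) (at_right 0)"
    by (rule Lim_transform_eventually)
  then show ?thesis by (simp add: divide_inverse inverse_mult_distrib)
qed

lemma set_integrable_Beta_kernel:
  fixes a b :: real
  assumes "0 < a" "0 < b"
  shows "set_integrable lborel {0<..<1} (\<lambda>t. t powr (a - 1) * (1 - t) powr (b - 1))"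
  by (rule set_integrable_subset[OF integrable_Beta[OF assms]]) auto

lemma Phi_integrand_bound:
  fixes \<theta> r a s u y :: real
  assumes "s \<in> {0<..1}" "u \<in> {0<..<1}" "y \<in> {0<..<1}"
  shows "\<bar>u powr (1 - r) * (1 - u) powr (a - 1) / ((1 - y) powr r * (1 + s * y * u) powr (\<theta> + 1))\<bar>
           \<le> 2 powr \<bar>\<theta> + 1\<bar> * (u powr (1 - r) * (1 - u) powr (a - 1)) * (1 - y) powr (- r)"
proof -
  define P where "P = u powr (1 - r) * (1 - u) powr (a - 1)"
  have "inverse ((1 + s * y * u) powr (\<theta> + 1)) \<le> 2 powr \<bar>\<theta> + 1\<bar>"
    using assms by (intro inverse_powr_le_two_powr_abs) (auto simp: mult_le_one)
  moreover have "0 \<le> P * (1 - y) powr (- r)" by (simp add: P_def)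
  ultimately have "P * (1 - y) powr (- r) * inverse ((1 + s * y * u) powr (\<theta> + 1))
      \<le> P * (1 - y) powr (- r) * 2 powr \<bar>\<theta> + 1\<bar>"
    by (rule mult_left_mono)
  moreover have "P / ((1 - y) powr r * (1 + s * y * u) powr (\<theta> + 1))
      = P * (1 - y) powr (- r) * inverse ((1 + s * y * u) powr (\<theta> + 1))"
    by (simp add: powr_minus divide_inverse inverse_mult_distrib mult_ac)
  ultimately show ?thesis
    using \<open>0 \<le> P * (1 - y) powr (- r)\<close> by (simp add: P_def mult_ac)
qed

lemma Phi_double_integral_bounded:
  fixes \<theta> r a :: real
  assumes r: "r < 1" and a: "0 < a"
  obtains B where "\<And>s. s \<in> {0<..1} \<Longrightarrow>
    \<bar>LBINT u=0..1. (LBINT y=0..1. u powr (1 - r) * (1 - u) powr (a - 1)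
        / ((1 - y) powr r * (1 + s * y * u) powr (\<theta> + 1)))\<bar> \<le> B"
proof -
  define P where "P = (\<lambda>u::real. u powr (1 - r) * (1 - u) powr (a - 1))"
  define Y where "Y = (\<lambda>y::real. (1 - y) powr (- r))"
  define Q where "Q = 2 powr \<bar>\<theta> + 1\<bar>"
  have P: "set_integrable lborel {0<..<1} P"
    using set_integrable_Beta_kernel[of "2 - r" a] r a by (simp add: P_def)
  have "set_integrable lborel {0<..<1} (\<lambda>t. t powr (1 - 1) * (1 - t) powr ((1 - r) - 1))"
    using r by (intro set_integrable_Beta_kernel) auto
  then have Y: "set_integrable lborel {0<..<1} Y"
    by (rule set_integrable_cong[OF refl refl, THEN iffD1, rotated]) (auto simp: Y_def)
  show ?thesis
  proof (rule that)
    fix s :: real assume s: "s \<in> {0<..1}"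
    have "\<bar>LINT u:{0<..<1}|lborel. (LINT y:{0<..<1}|lborel.
        P u / ((1 - y) powr r * (1 + s * y * u) powr (\<theta> + 1)))\<bar>
        \<le> (LINT u:{0<..<1}|lborel. (Q * (LINT y:{0<..<1}|lborel. Y y)) * P u)"
    proof (rule abs_set_integral_le_bound)
      show "set_integrable lborel {0<..<1} (\<lambda>u. (Q * (LINT y:{0<..<1}|lborel. Y y)) * P u)"
        using P by (rule set_integrable_mult_right)
      fix u :: real assume u: "u \<in> {0<..<1}"
      have "\<bar>LINT y:{0<..<1}|lborel. P u / ((1 - y) powr r * (1 + s * y * u) powr (\<theta> + 1))\<bar>
          \<le> (LINT y:{0<..<1}|lborel. Q * P u * Y y)"
        using Phi_integrand_bound[OF s u] Y unfolding P_def Y_def Q_def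
        by (intro abs_set_integral_le_bound set_integrable_mult_right)
      then show "\<bar>LINT y:{0<..<1}|lborel. P u / ((1 - y) powr r * (1 + s * y * u) powr (\<theta> + 1))\<bar>
          \<le> (Q * (LINT y:{0<..<1}|lborel. Y y)) * P u"
        by (simp add: mult_ac)
    qed
    then show "\<bar>LBINT u=0..1. (LBINT y=0..1. u powr (1 - r) * (1 - u) powr (a - 1)
        / ((1 - y) powr r * (1 + s * y * u) powr (\<theta> + 1)))\<bar>
        \<le> Q * (LINT y:{0<..<1}|lborel. Y y) * (LINT u:{0<..<1}|lborel. P u)"
      by (simp add: interval_lebesgue_integral_def zero_ereal_def one_ereal_def P_def)
  qed
qed

lemma Phi_asymp_at_0:
  fixes \<theta> r a :: real
  assumes a: "0 < a" and r: "r < 1"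
  shows "((\<lambda>s. (1 - Phi \<theta> r a s) / s powr r)
           \<longlongrightarrow> (a + 1 - \<theta> - r) * Beta (1 - \<theta>) (a + 1 - r) / (a * Beta a (1 - \<theta> - r))) (at_right 0)"
proof -
  define c where "c = (a + 1 - \<theta> - r) * Beta (1 - \<theta>) (a + 1 - r)"
  define D where "D s = (LBINT u=0..1. (LBINT y=0..1. u powr (1 - r) * (1 - u) powr (a - 1)
      / ((1 - y) powr r * (1 + s * y * u) powr (\<theta> + 1))))" for s
  obtain B where B: "\<And>s. s \<in> {0<..1} \<Longrightarrow> \<bar>D s\<bar> \<le> B"
    using Phi_double_integral_bounded[OF r a, of \<theta>] unfolding D_def by blast
  have incomplete: "((\<lambda>s. c * (s + 1) powr (a - \<theta> - r) * (regIncBeta (s / (s + 1)) a (1 - \<theta> - r) / s powr a))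
      \<longlongrightarrow> c * (0 + 1) powr (a - \<theta> - r) * (1 / (a * Beta a (1 - \<theta> - r)))) (at_right 0)"
    by (intro tendsto_intros regIncBeta_asymp_at_0[OF a]) auto
  have "\<bar>\<theta> / Beta (1 - r) a * D s\<bar> \<le> \<bar>\<theta> / Beta (1 - r) a\<bar> * B" if "s \<in> {0<..1}" for s
    unfolding abs_mult using B[OF that] by (rule mult_left_mono) simp
  then have "((\<lambda>s. s * (\<theta> / Beta (1 - r) a * D s) / s powr r) \<longlongrightarrow> 0) (at_right 0)"
    by (rule tendsto_bounded_times_powr_at_0[OF r])
  then have double: "((\<lambda>s. s * \<theta> / Beta (1 - r) a * D s / s powr r) \<longlongrightarrow> 0) (at_right 0)"
    by (simp add: mult_ac)
  have "\<forall>\<^sub>F s in at_right 0.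
      c * (s + 1) powr (a - \<theta> - r) * (regIncBeta (s / (s + 1)) a (1 - \<theta> - r) / s powr a)
        + s * \<theta> / Beta (1 - r) a * D s / s powr r
      = (1 - Phi \<theta> r a s) / s powr r"
    using eventually_at_right_less[of "0::real"]
    by (rule eventually_mono) (simp add: Phi_def c_def D_def powr_diff add_divide_distrib field_simps)
  with tendsto_add[OF incomplete double] show ?thesis
    by (simp add: Lim_transform_eventually c_def)
qed

theorem theorem5:
  fixes \<theta> \<rho> \<alpha> a :: real and M :: "real measure"
  assumes "\<theta> < 1/2" and "1/2 < \<rho>" and "\<rho> < 1" and "\<theta> + \<rho> < 1"
    and "1/2 < \<alpha>" and "\<alpha> \<le> 1"
    and "a = \<rho> \<or> a = \<alpha>"
    and "prob_space M" and "sets M = sets borel"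
    and "AE x in M. 0 \<le> x"
    and "\<And>s. 0 \<le> s \<Longrightarrow> (\<integral>x. exp (- s * x) \<partial>M) = Phi \<theta> \<rho> a s"
  shows "\<exists>C>0. (\<lambda>x. 1 - cdf M x) \<sim>[at_top] (\<lambda>x. C * x powr (- \<rho>))"
proof -
  have a: "0 < a" and r: "0 < \<rho>" "\<rho> < 1" using assms(2,3,5,7) by auto
  define K where "K = (a + 1 - \<theta> - \<rho>) * Beta (1 - \<theta>) (a + 1 - \<rho>) / (a * Beta a (1 - \<theta> - \<rho>))"
  have K: "K > 0"
    using assms(1,4) a r by (simp add: K_def Beta_def Gamma_real_pos)
  have "\<forall>\<^sub>F s in at_right 0. (1 - Phi \<theta> \<rho> a s) / s powr \<rho> = (1 - (\<integral>x. exp (- s * x) \<partial>M)) / s powr \<rho>"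
    using eventually_at_right_less[of "0::real"] by (rule eventually_mono) (subst assms(11); simp)
  with Phi_asymp_at_0[OF a r(2), of \<theta>]
  have "((\<lambda>s. (1 - (\<integral>x. exp (- s * x) \<partial>M)) / s powr \<rho>) \<longlongrightarrow> K) (at_right 0)"
    unfolding K_def by (rule Lim_transform_eventually)
  from karamata_tauberian[OF assms(8-10) r this]
  have "(\<lambda>x. 1 - cdf M x) \<sim>[at_top] (\<lambda>x. K / (\<rho> * karamata_integral \<rho> (\<lambda>t. 1 - t)) * x powr (- \<rho>))"
    by (rule tail_asymp_equiv_at_top[OF assms(8,9)])
      (use K r karamata_integral_one_minus_pos[OF r] in simp)
  moreover have "K / (\<rho> * karamata_integral \<rho> (\<lambda>t. 1 - t)) > 0"
    using K r karamata_integral_one_minus_pos[OF r] by simp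
  ultimately show ?thesis by blast
qed

end
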